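(* Define $f:\mathbb{R}\to\mathbb{R}$ by $f(x)=x$ if $x\in\{0\}\cup[1,\infty)$; $f(x)=2^{-n}$ if $x\in[3\cdot2^{-(n+2)},2^{-n})$, $n=0,1,2,\dots$; $f(x)=2x-2^{-(n+1)}$ if $x\in[2^{-(n+1)},3\cdot2^{-(n+2)})$, $n=0,1,2,\dots$; and $f(x)=f(-x)$ if $x<0$. Then $f(x)\ge f(0)+x^2$ for all $x\in[-1,1]$, so $\bar x=0$ is a strong local minimizer of $f$, while $\mathbb{R}\times\{0\}\subset T_{\operatorname{gph}\partial f}(0,0)$; in particular, for every $w\ne0$ one has $0\in D(\partial f)(0|0)(w)$, so there is no $w\neq 0$-uniform positivity: $\langle z,w\rangle=0$ for $z=0\in D(\partial f)(0|0)(w)$.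
   Context: $\partial f$ is the limiting subdifferential: $\partial f(\bar x)=\{v\mid (v,-1)\in N_{\operatorname{epi} f}(\bar x,f(\bar x))\}$ with $N$ the limiting normal cone. The tangent cone is $T_\Omega(\bar u)=\{v\mid \exists t_k\downarrow0,\ v_k\to v,\ \bar u+t_kv_k\in\Omega\}$ and $D(\partial f)(\bar x|\bar v)(w)=\{z\mid (w,z)\in T_{\operatorname{gph}\partial f}(\bar x,\bar v)\}$. $\bar x$ is a strong local minimizer if there are $\kappa,\gamma>0$ with $f(x)-f(\bar x)\ge\frac\kappa2|x-\bar x|^2$ for $|x-\bar x|\le\gamma$. *)

theory Defs
  imports "HOL-Analysis.Analysis"
begin

definition regular_normal_cone :: "'a::real_inner set \<Rightarrow> 'a \<Rightarrow> 'a set" where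
  "regular_normal_cone \<Omega> u = {v. u \<in> \<Omega> \<and>
     (\<forall>\<epsilon>>0. \<exists>\<delta>>0. \<forall>u'\<in>\<Omega>. norm (u' - u) < \<delta> \<longrightarrow> inner v (u' - u) \<le> \<epsilon> * norm (u' - u))}"

definition limiting_normal_cone :: "'a::real_inner set \<Rightarrow> 'a \<Rightarrow> 'a set" where
  "limiting_normal_cone \<Omega> u = {v. u \<in> \<Omega> \<and>
     (\<exists>uk vk. (\<forall>k. uk k \<in> \<Omega> \<and> vk k \<in> regular_normal_cone \<Omega> (uk k))
        \<and> uk \<longlonglongrightarrow> u \<and> vk \<longlonglongrightarrow> v)}"

definition limiting_subdiff :: "(real \<Rightarrow> real) \<Rightarrow> real \<Rightarrow> real set" where
  "limiting_subdiff f x = {v. (v, -1) \<in> limiting_normal_cone {(y, \<alpha>). f y \<le> \<alpha>} (x, f x)}"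

definition gph :: "('a \<Rightarrow> 'b set) \<Rightarrow> ('a \<times> 'b) set" where
  "gph S = {(x, v). v \<in> S x}"

definition tangent_cone :: "'a::real_normed_vector set \<Rightarrow> 'a \<Rightarrow> 'a set" where
  "tangent_cone \<Omega> u = {v. \<exists>t vk. (\<forall>k. t k > 0) \<and> t \<longlonglongrightarrow> 0 \<and> vk \<longlonglongrightarrow> v
       \<and> (\<forall>k. u + t k *\<^sub>R vk k \<in> \<Omega>)}"

definition graph_deriv :: "('a::real_normed_vector \<Rightarrow> 'b::real_normed_vector set) \<Rightarrow> 'a \<Rightarrow> 'b \<Rightarrow> 'a \<Rightarrow> 'b set" where
  "graph_deriv S x v w = {z. (w, z) \<in> tangent_cone (gph S) (x, v)}"

definition strong_local_minimizer :: "('a::real_normed_vector \<Rightarrow> real) \<Rightarrow> 'a \<Rightarrow> bool" where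
  "strong_local_minimizer f x0 \<longleftrightarrow> (\<exists>\<kappa>>0. \<exists>\<gamma>>0. \<forall>x. norm (x - x0) \<le> \<gamma> \<longrightarrow>
      f x - f x0 \<ge> \<kappa> / 2 * (norm (x - x0))\<^sup>2)"

definition fpos :: "real \<Rightarrow> real" where
  "fpos x = (if x = 0 \<or> x \<ge> 1 then x
     else if \<exists>n::nat. 3 / 2^(n+2) \<le> x \<and> x < 1 / 2^n
       then 1 / 2^(THE n::nat. 3 / 2^(n+2) \<le> x \<and> x < 1 / 2^n)
     else if \<exists>n::nat. 1 / 2^(n+1) \<le> x \<and> x < 3 / 2^(n+2)
       then 2 * x - 1 / 2^((THE n::nat. 1 / 2^(n+1) \<le> x \<and> x < 3 / 2^(n+2)) + 1)
     else undefined)"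

definition fex :: "real \<Rightarrow> real" where
  "fex x = (if x < 0 then fpos (- x) else fpos x)"

end

theory Submission
  imports Defs
begin

text \<open>On each dyadic interval [2^-(n+1), 2^-n) the function f is at least the identity (it is
  the identity lifted to the right endpoint on the upper quarter, and a slope-2 ramp starting
  at the identity on the rest), so f(x) \<ge> |x| \<ge> x^2 on [-1,1]. On the other hand f is locally
  constant around the midpoints 7/2^(k+3) of the flat pieces, so 0 is a limiting subgradient
  there; these points tend to 0 along both half-lines, which puts every direction (w,0) into
  the tangent cone to the graph of the subdifferential at (0,0).\<close>

lemma dyadic_interval_unique:
  assumes "(1::real) / 2^(m+1) \<le> y" "y < 1 / 2^m" "1 / 2^(n+1) \<le> y" "y < 1 / 2^n"
  shows "m = n"
proof (rule ccontr)
  have below: "(1::real) / 2^i \<le> 1 / 2^(j+1)" if "j < i" for i j :: nat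
  proof -
    have "(2::real)^(j+1) \<le> 2^i" using that by (intro power_increasing) auto
    then show ?thesis by (simp add: frac_le)
  qed
  assume "m \<noteq> n"
  then show False using below[of n m] below[of m n] assms by linarith
qed

lemma dyadic_interval_exists:
  assumes "0 < y" "y < (1::real)"
  obtains n where "1 / 2^(n+1) \<le> y" "y < 1 / 2^n"
proof -
  obtain N where "1 / y < 2^N" using real_arch_pow[of 2 "1 / y"] by auto
  hence ex: "\<exists>n. (1::real) / 2^n \<le> y" using assms by (auto simp: field_simps intro: less_imp_le)
  define m where "m = (LEAST n. (1::real) / 2^n \<le> y)"
  have m: "1 / 2^m \<le> y" unfolding m_def by (rule LeastI_ex[OF ex])
  with assms obtain k where k: "m = Suc k" by (cases m) auto
  have "\<not> (1::real) / 2^k \<le> y" using not_less_Least[of k "\<lambda>n. (1::real) / 2^n \<le> y"] k m_def by auto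
  with m k show thesis by (intro that[of k]) auto
qed

lemma the_dyadic_index:
  assumes "\<And>m. P m \<Longrightarrow> (1::real) / 2^(m+1) \<le> y \<and> y < 1 / 2^m" "P n"
  shows "(THE m. P m) = n"
  using assms dyadic_interval_unique by (intro the_equality) blast+

lemma quarter_points:
  "(1::real) / 2^(n+1) < 3 / 2^(n+2)" "(3::real) / 2^(n+2) < 1 / 2^n" "(1::real) / 2^n \<le> 1"
  by (simp_all add: field_simps)

lemma fpos_flat:
  assumes "3 / 2^(n+2) \<le> y" "y < (1::real) / 2^n"
  shows "fpos y = 1 / 2^n"
proof -
  have "(0::real) < 3 / 2^(n+2)" by simp
  then have "0 < y" "y < 1" using assms quarter_points[of n] by linarith+
  moreover have "(THE m::nat. 3 / 2^(m+2) \<le> y \<and> y < 1 / 2^m) = n"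
    using assms quarter_points by (intro the_dyadic_index) (auto intro: order.trans[OF less_imp_le])
  ultimately show ?thesis using assms unfolding fpos_def by auto
qed

lemma fpos_ramp:
  assumes "1 / 2^(n+1) \<le> y" "y < (3::real) / 2^(n+2)"
  shows "fpos y = 2 * y - 1 / 2^(n+1)"
proof -
  have "(0::real) < 1 / 2^(n+1)" by simp
  then have "0 < y" "y < 1" using assms quarter_points[of n] by linarith+
  moreover have "\<not> (3 / 2^(m+2) \<le> y \<and> y < (1::real) / 2^m)" for m
    using assms quarter_points dyadic_interval_unique[of m y n] by fastforce
  moreover have "(THE m::nat. 1 / 2^(m+1) \<le> y \<and> y < 3 / 2^(m+2)) = n"
    using assms quarter_points by (intro the_dyadic_index) (auto intro: order.strict_trans)
  ultimately show ?thesis using assms unfolding fpos_def by auto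
qed

lemma fpos_ge_self:
  assumes "0 \<le> y" "y \<le> 1"
  shows "y \<le> fpos y"
proof (cases "y = 0 \<or> y = 1")
  case True
  then show ?thesis by (auto simp: fpos_def)
next
  case False
  with assms have "0 < y" "y < 1" by auto
  then obtain n where n: "1 / 2^(n+1) \<le> y" "y < (1::real) / 2^n"
    by (rule dyadic_interval_exists)
  show ?thesis
  proof (cases "3 / 2^(n+2) \<le> y")
    case True
    with n show ?thesis by (simp add: fpos_flat)
  next
    case False
    with n show ?thesis by (simp add: fpos_ramp)
  qed
qed

lemma fex_eq_fpos_abs: "fex x = fpos \<bar>x\<bar>"
  by (simp add: fex_def)

lemma fex_0: "fex 0 = 0"
  by (simp add: fex_def fpos_def)

lemma fex_ge_abs: "\<bar>x\<bar> \<le> 1 \<Longrightarrow> \<bar>x\<bar> \<le> fex x"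
  by (simp add: fex_eq_fpos_abs fpos_ge_self)

lemma fex_nonneg: "0 \<le> fex x"
proof (cases "\<bar>x\<bar> \<le> 1")
  case True
  then show ?thesis using fex_ge_abs[of x] by linarith
next
  case False
  then show ?thesis by (simp add: fex_eq_fpos_abs fpos_def)
qed

lemma fex_quadratic_growth:
  assumes "x \<in> {-1..1}"
  shows "fex 0 + x\<^sup>2 \<le> fex x"
proof -
  have "\<bar>x\<bar> \<le> 1" using assms by auto
  have "x\<^sup>2 = \<bar>x\<bar> * \<bar>x\<bar>" by (simp add: power2_eq_square)
  also have "\<dots> \<le> \<bar>x\<bar>" using \<open>\<bar>x\<bar> \<le> 1\<close> by (intro mult_left_le) simp_all
  also have "\<dots> \<le> fex x" using \<open>\<bar>x\<bar> \<le> 1\<close> by (rule fex_ge_abs)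
  finally show ?thesis by (simp add: fex_0)
qed

lemma fex_locally_constant:
  assumes "\<bar>x\<bar> = 7 / 2^(k+3)" "\<bar>y - x\<bar> < 1 / 2^(k+3)"
  shows "fex y = fex x"
proof -
  have "\<bar>\<bar>y\<bar> - \<bar>x\<bar>\<bar> < 1 / 2^(k+3)" using assms(2) abs_triangle_ineq3[of y x] by linarith
  then have "3 / 2^(k+2) \<le> \<bar>y\<bar>" "\<bar>y\<bar> < 1 / 2^k" "3 / 2^(k+2) \<le> \<bar>x\<bar>" "\<bar>x\<bar> < (1::real) / 2^k"
    using assms(1) by (auto simp: field_simps power_add abs_less_iff)
  then show ?thesis by (simp add: fex_eq_fpos_abs fpos_flat)
qed

lemma strong_local_minimizerI:
  assumes "\<kappa> > 0" "\<gamma> > 0" "\<And>x. norm (x - x0) \<le> \<gamma> \<Longrightarrow> f x0 + \<kappa> / 2 * (norm (x - x0))\<^sup>2 \<le> f x"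
  shows "strong_local_minimizer f x0"
  unfolding strong_local_minimizer_def using assms by force

lemma local_min_imp_zero_in_limiting_subdiff:
  assumes "d > 0" "\<And>y. \<bar>y - x\<bar> < d \<Longrightarrow> f x \<le> f y"
  shows "0 \<in> limiting_subdiff f x"
proof -
  let ?E = "{(y, \<alpha>). f y \<le> \<alpha>}"
  have "(0, -1) \<in> regular_normal_cone ?E (x, f x)"
    unfolding regular_normal_cone_def
  proof (intro CollectI conjI allI impI)
    fix e :: real assume "e > 0"
    show "\<exists>\<delta>>0. \<forall>u\<in>?E. norm (u - (x, f x)) < \<delta> \<longrightarrow> inner (0, -1) (u - (x, f x)) \<le> e * norm (u - (x, f x))"
    proof (intro exI[of _ d] conjI ballI impI)
      fix u assume "u \<in> ?E" and near: "norm (u - (x, f x)) < d"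
      then obtain y a where u: "u = (y, a)" and "f y \<le> a" by auto
      have "\<bar>y - x\<bar> < d" using near norm_fst_le[of "y - x" "a - f x"] u by simp
      then have "inner (0, -1) (u - (x, f x)) \<le> 0" using \<open>f y \<le> a\<close> assms(2) u by force
      also have "0 \<le> e * norm (u - (x, f x))" using \<open>e > 0\<close> by simp
      finally show "inner (0, -1) (u - (x, f x)) \<le> e * norm (u - (x, f x))" .
    qed (rule \<open>d > 0\<close>)
  qed simp
  then show ?thesis unfolding limiting_subdiff_def limiting_normal_cone_def
    by (intro CollectI conjI exI[of _ "\<lambda>k. (x, f x)"] exI[of _ "\<lambda>k. (0::real, -1::real)"]) auto
qed

lemma zero_in_limiting_subdiff_fex:
  assumes "x = 0 \<or> \<bar>x\<bar> = 7 / 2^(k+3)"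
  shows "(x, 0) \<in> gph (limiting_subdiff fex)"
proof -
  have "0 \<in> limiting_subdiff fex x"
    using assms
  proof
    assume "x = 0"
    show ?thesis
      by (rule local_min_imp_zero_in_limiting_subdiff[of 1]) (simp_all add: \<open>x = 0\<close> fex_0 fex_nonneg)
  next
    assume "\<bar>x\<bar> = 7 / 2^(k+3)"
    show ?thesis
      by (rule local_min_imp_zero_in_limiting_subdiff[of "1 / 2^(k+3)"])
        (simp, metis fex_locally_constant[OF \<open>\<bar>x\<bar> = 7 / 2^(k+3)\<close>] order_refl)
  qed
  then show ?thesis by (simp add: gph_def)
qed

lemma tangent_coneI:
  assumes "\<And>k. t k > 0" "t \<longlonglongrightarrow> 0" "\<And>k. u + t k *\<^sub>R v \<in> \<Omega>"
  shows "v \<in> tangent_cone \<Omega> u"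
  unfolding tangent_cone_def using assms by (intro CollectI exI[of _ t] exI[of _ "\<lambda>k. v"]) auto

lemma horizontal_tangent_gph_subdiff_fex:
  "(w, 0) \<in> tangent_cone (gph (limiting_subdiff fex)) (0, 0)"
proof (cases "w = 0")
  case True
  show ?thesis unfolding True
    using LIMSEQ_inverse_real_of_nat
    by (intro tangent_coneI[of "\<lambda>k. inverse (real (Suc k))"]) (simp_all add: zero_in_limiting_subdiff_fex)
next
  case False
  define t where "t k = 7 / 2^(k+3) / \<bar>w\<bar>" for k :: nat
  have "(\<lambda>k. 7 / 8 * inverse ((2::real)^k) / \<bar>w\<bar>) \<longlonglongrightarrow> 0"
    by (intro tendsto_divide_zero tendsto_mult_right_zero LIMSEQ_inverse_realpow_zero) simp
  moreover have "(\<lambda>k. 7 / 8 * inverse ((2::real)^k) / \<bar>w\<bar>) = t"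
    by (simp add: fun_eq_iff t_def power_add field_simps)
  moreover have "\<bar>t k * w\<bar> = 7 / 2^(k+3)" for k
    using False by (simp add: t_def abs_mult)
  ultimately show ?thesis using False
    by (intro tangent_coneI[of t]) (auto simp: t_def zero_in_limiting_subdiff_fex)
qed

theorem mainTheorem4:
  shows "(\<forall>x\<in>{-1..1}. fex x \<ge> fex 0 + x\<^sup>2)
    \<and> strong_local_minimizer fex 0
    \<and> UNIV \<times> {0} \<subseteq> tangent_cone (gph (limiting_subdiff fex)) (0, 0)
    \<and> (\<forall>w::real. w \<noteq> 0 \<longrightarrow> 0 \<in> graph_deriv (limiting_subdiff fex) 0 0 w \<and> 0 * w = (0::real))"
proof -
  have "strong_local_minimizer fex 0"
    using fex_quadratic_growth by (intro strong_local_minimizerI[of 2 1]) (auto simp: abs_le_iff)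
  then show ?thesis
    using fex_quadratic_growth horizontal_tangent_gph_subdiff_fex
    by (auto simp: graph_deriv_def)
qed

end
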